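(* Let $K=u^2\partial_u-2(1+uR)\partial_R$. Then $$\hat g(K,K)=4u^2\Big(1+Ru+\tfrac14R^2u^2f(R)\Big).$$ Furthermore, the following are equivalent: - $f(0)>\frac34$; - there exist $u_0<0$ and $c>0$ such that $\hat g(K,K)\ge c\,u^2$ on $\Omega_{u_0}$ (i.e. $K$ is uniformly timelike on $\Omega_{u_0}$).
   Context: Let $a>0$ and let $f$ be an analytic positive function on $[0,a)$. On a manifold with coordinates $(u,R,\omega)\in\mathbb R\times[0,a)\times S^2$ consider $$\hat g=R^2f(R)\,du^2-2\,du\,dR-d\omega^2,$$ with future null infinity $\mathscr I^+=\{R=0\}$. Put $r=1/R$. Fix a function $r_*$ of $r$ with $\frac{dr_*}{dr}=\frac1{f(1/r)}$ (equivalently $dR=-R^2f(R)\,dr_*$), and set $t=u+r_*$. For $u_0<0$, let $\Omega_{u_0}=\{t\ge0\}\cap\{u<u_0\}$. *)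

theory Defs
  imports "HOL-Analysis.Analysis"
begin

definition real_analytic_on :: "(real \<Rightarrow> real) \<Rightarrow> real set \<Rightarrow> bool" where
  "real_analytic_on f S \<longleftrightarrow>
     (\<forall>x\<in>S. \<exists>\<delta>>0. \<exists>c :: nat \<Rightarrow> real.
        \<forall>y\<in>S. \<bar>y - x\<bar> < \<delta> \<longrightarrow> (\<lambda>n. c n * (y - x) ^ n) sums f y)"

text \<open>The metric ghat = R^2 f(R) du^2 - 2 du dR - d\<omega>^2 evaluated on two tangent vectors
  at a point with coordinate R, for vectors with no S^2-component, written as
  (du-component, dR-component).\<close>
definition ghat :: "(real \<Rightarrow> real) \<Rightarrow> real \<Rightarrow> real \<times> real \<Rightarrow> real \<times> real \<Rightarrow> real" where
  "ghat f R X Y = R^2 * f R * fst X * fst Y - (fst X * snd Y + snd X * fst Y)"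

definition Kfield :: "real \<Rightarrow> real \<Rightarrow> real \<times> real" where
  "Kfield u R = (u^2, -2 * (1 + u * R))"

text \<open>\<Omega>_{u0} = {t \<ge> 0} \<inter> {u < u0} in the (u,R)-coordinates (S^2 factor suppressed),
  where t = u + r_*(r), r = 1/R, on the region 0 < R < a where r is defined.\<close>
definition Omega :: "real \<Rightarrow> (real \<Rightarrow> real) \<Rightarrow> real \<Rightarrow> (real \<times> real) set" where
  "Omega a rs u0 = {(u, R). 0 < R \<and> R < a \<and> u < u0 \<and> u + rs (1 / R) \<ge> 0}"

end

theory Submission
  imports Defs
begin

text \<open>Put \<open>x = -R u\<close>, so that \<open>\<hat>g(K,K) = 4u\<^sup>2 q(x)\<close> with \<open>q(x) = 1 - x + x\<^sup>2 f(R)/4\<close>.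
  On \<open>\<Omega>\<^sub>u\<^sub>0\<close> the condition \<open>t \<ge> 0\<close> reads \<open>0 \<le> x \<le> X(R) := R r\<^sub>*(1/R)\<close>, and \<open>u < u\<^sub>0\<close>
  forces \<open>R\<close> to be small because the tortoise coordinate \<open>r\<^sub>*\<close> is increasing. By l'Hopital
  \<open>X(R) \<rightarrow> 1/f(0)\<close> as \<open>R \<rightarrow> 0\<^sup>+\<close>; since \<open>q\<close> decreases on \<open>[0, 2/f(R)]\<close>, the infimum of \<open>q\<close>
  over \<open>[0, X(R)]\<close> is \<open>q(X(R)) \<rightarrow> 1 - 3/(4 f(0))\<close>. This limit is positive exactly when
  \<open>f(0) > 3/4\<close>, and it is attained on the null cone \<open>t = 0\<close>.\<close>

lemma ghat_Kfield:
  "ghat f R (Kfield u R) (Kfield u R) = 4 * u^2 * (1 + R * u + R^2 * u^2 * f R / 4)"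
  by (simp add: ghat_def Kfield_def power2_eq_square algebra_simps)

lemma real_analytic_on_imp_continuous_within:
  assumes "real_analytic_on f S" and "x \<in> S"
  shows "continuous (at x within S) f"
proof (cases "x islimpt S")
  case False
  then have "at x within S = bot" using trivial_limit_within by blast
  then show ?thesis by (simp only: continuous_bot)
next
  case True
  from assms obtain \<delta> and c :: "nat \<Rightarrow> real" where "\<delta> > 0"
    and sums: "\<And>y. y \<in> S \<Longrightarrow> \<bar>y - x\<bar> < \<delta> \<Longrightarrow> (\<lambda>n. c n * (y - x) ^ n) sums f y"
    unfolding real_analytic_on_def by blast
  define P where "P z = (\<Sum>n. c n * z ^ n)" for z :: real
  obtain y where "y \<in> S" "y \<noteq> x" "\<bar>y - x\<bar> < \<delta>"
    using True \<open>\<delta> > 0\<close> unfolding islimpt_approachable dist_real_def by blast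
  then have "summable (\<lambda>n. c n * (y - x) ^ n)"
    using sums sums_summable by blast
  then have "isCont P (x - x)"
    unfolding P_def by (rule isCont_powser) (use \<open>y \<noteq> x\<close> in simp)
  then have "continuous (at x within S) (\<lambda>y. P (y - x))"
    by (rule continuous_within_compose3) (intro continuous_intros)
  then show ?thesis
  proof (rule continuous_transform_within[OF _ \<open>\<delta> > 0\<close> \<open>x \<in> S\<close>])
    show "P (y - x) = f y" if "y \<in> S" "dist y x < \<delta>" for y
      using sums[of y] that unfolding P_def dist_real_def by (simp add: sums_iff)
  qed
qed

lemma real_analytic_on_Ico_tendsto_at_right:
  assumes "a > 0" and "real_analytic_on f {0..<a}"
  shows "(f \<longlongrightarrow> f 0) (at_right 0)"
proof -
  have "continuous (at 0 within {0..<a}) f"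
    using assms by (intro real_analytic_on_imp_continuous_within) auto
  then have "continuous (at 0 within {0..a/2}) f"
    by (rule continuous_within_subset) (use assms in auto)
  then show ?thesis
    using assms by (simp add: continuous_within at_within_Icc_at_right)
qed

lemma tortoise_ratio_tendsto:
  fixes f rs :: "real \<Rightarrow> real"
  assumes f_cont: "(f \<longlongrightarrow> f 0) (at_right 0)" and "f 0 \<noteq> 0"
    and rs_deriv: "\<forall>r>b. (rs has_real_derivative 1 / f (1 / r)) (at r)"
  shows "((\<lambda>R. R * rs (1 / R)) \<longlongrightarrow> 1 / f 0) (at_right 0)"
proof -
  have "((\<lambda>r. f (inverse r)) \<longlongrightarrow> f 0) at_top"
    using filterlim_compose[OF f_cont filterlim_inverse_at_right_top] .
  then have deriv_lim: "((\<lambda>r. 1 / f (1 / r) / 1) \<longlongrightarrow> 1 / f 0) at_top"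
    using \<open>f 0 \<noteq> 0\<close> by (auto intro!: tendsto_divide simp: inverse_eq_divide)
  have "((\<lambda>r. rs r / r) \<longlongrightarrow> 1 / f 0) at_top"
  proof (rule lhospital_at_top_at_top[OF filterlim_ident _ _ _ deriv_lim])
    show "\<forall>\<^sub>F r in at_top. (rs has_real_derivative 1 / f (1 / r)) (at r)"
      using eventually_gt_at_top[of b] by eventually_elim (use rs_deriv in auto)
  qed (auto intro: DERIV_ident)
  then have "((\<lambda>R. rs (inverse R) / inverse R) \<longlongrightarrow> 1 / f 0) (at_right 0)"
    by (simp only: filterlim_at_top_to_right)
  then show ?thesis
    by (simp add: inverse_eq_divide mult.commute)
qed

lemma tortoise_mono:
  fixes f rs :: "real \<Rightarrow> real"
  assumes "a > 0" and f_pos: "\<forall>R\<in>{0..<a}. f R > 0"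
    and rs_deriv: "\<forall>r>1 / a. (rs has_real_derivative 1 / f (1 / r)) (at r)"
    and "1 / a < s" "s \<le> t"
  shows "rs s \<le> rs t"
proof (rule DERIV_nonneg_imp_nondecreasing[OF \<open>s \<le> t\<close>])
  fix r assume "s \<le> r" "r \<le> t"
  then have "1 / a < r" using \<open>1 / a < s\<close> by linarith
  moreover have "r > 0" using \<open>a > 0\<close> \<open>1 / a < r\<close> by (auto intro: less_trans[OF _ \<open>1 / a < r\<close>])
  ultimately have "1 / r \<in> {0..<a}" using \<open>a > 0\<close> by (simp add: field_simps)
  then have "1 / f (1 / r) \<ge> 0" using f_pos by (simp add: less_imp_le)
  then show "\<exists>y. (rs has_real_derivative y) (at r) \<and> 0 \<le> y"
    using rs_deriv \<open>1 / a < r\<close> by blast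
qed

lemma quadratic_antimono:
  fixes x X F :: real
  assumes "0 \<le> x" "x \<le> X" "F \<ge> 0" "X * F \<le> 2"
  shows "1 - X + X^2 * F / 4 \<le> 1 - x + x^2 * F / 4"
proof -
  have "x * F \<le> X * F" using assms by (simp add: mult_right_mono)
  then have "0 \<le> (X - x) * (1 - (X + x) * F / 4)"
    using assms by (intro mult_nonneg_nonneg) (auto simp: algebra_simps)
  moreover have "(1 - x + x^2 * F / 4) - (1 - X + X^2 * F / 4) = (X - x) * (1 - (X + x) * F / 4)"
    by (simp add: field_simps power2_eq_square)
  ultimately show ?thesis by linarith
qed

lemma Omega_small_R:
  assumes rs_mono: "\<And>s t. 1 / a < s \<Longrightarrow> s \<le> t \<Longrightarrow> rs s \<le> rs t"
    and "0 < \<delta>" "\<delta> < a" "u0 \<le> - rs (1 / \<delta>)" "(u, R) \<in> Omega a rs u0"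
  shows "R < \<delta>"
proof (rule ccontr)
  assume "\<not> R < \<delta>"
  have "0 < R" "R < a" "u < u0" "u + rs (1 / R) \<ge> 0"
    using \<open>(u, R) \<in> Omega a rs u0\<close> by (auto simp: Omega_def)
  have "1 / a < 1 / R" using \<open>0 < R\<close> \<open>R < a\<close> by (simp add: divide_strict_left_mono)
  moreover have "1 / R \<le> 1 / \<delta>" using \<open>\<not> R < \<delta>\<close> \<open>0 < \<delta>\<close> by (simp add: divide_left_mono)
  ultimately have "rs (1 / R) \<le> rs (1 / \<delta>)" by (rule rs_mono)
  then show False using \<open>u < u0\<close> \<open>u + rs (1 / R) \<ge> 0\<close> \<open>u0 \<le> - rs (1 / \<delta>)\<close> by linarith
qed

lemma null_cone_quadratic_tendsto:
  fixes f rs :: "real \<Rightarrow> real"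
  assumes f_cont: "(f \<longlongrightarrow> f 0) (at_right 0)" and "f 0 \<noteq> 0"
    and ratio: "((\<lambda>R. R * rs (1 / R)) \<longlongrightarrow> 1 / f 0) (at_right 0)"
  shows "((\<lambda>R. 1 - R * rs (1 / R) + (R * rs (1 / R))^2 * f R / 4)
           \<longlongrightarrow> 1 - 3 / (4 * f 0)) (at_right 0)"
proof -
  have "((\<lambda>R. 1 - R * rs (1 / R) + (R * rs (1 / R))^2 * f R / 4)
          \<longlongrightarrow> 1 - 1 / f 0 + (1 / f 0)^2 * f 0 / 4) (at_right 0)"
    by (intro tendsto_intros ratio f_cont) simp
  moreover have "1 - 1 / f 0 + (1 / f 0)^2 * f 0 / 4 = 1 - 3 / (4 * f 0)"
    using \<open>f 0 \<noteq> 0\<close> by (simp add: field_simps power2_eq_square)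
  ultimately show ?thesis by simp
qed

lemma uniformly_timelike_if_f0_gt:
  fixes f rs :: "real \<Rightarrow> real"
  assumes "a > 0" and f_pos: "\<forall>R\<in>{0..<a}. f R > 0"
    and f_cont: "(f \<longlongrightarrow> f 0) (at_right 0)"
    and ratio: "((\<lambda>R. R * rs (1 / R)) \<longlongrightarrow> 1 / f 0) (at_right 0)"
    and rs_mono: "\<And>s t. 1 / a < s \<Longrightarrow> s \<le> t \<Longrightarrow> rs s \<le> rs t"
    and "f 0 > 3 / 4"
  shows "\<exists>u0<0. \<exists>c>0. \<forall>(u, R)\<in>Omega a rs u0. ghat f R (Kfield u R) (Kfield u R) \<ge> c * u^2"
proof -
  define X where "X R = R * rs (1 / R)" for R
  define m where "m = 1 - 3 / (4 * f 0)"
  have "m > 0" using \<open>f 0 > 3 / 4\<close> by (simp add: m_def field_simps)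
  have "((\<lambda>R. 1 - X R + X R ^ 2 * f R / 4) \<longlongrightarrow> m) (at_right 0)"
    unfolding X_def m_def using \<open>f 0 > 3 / 4\<close>
    by (intro null_cone_quadratic_tendsto f_cont ratio) auto
  then have ev_m: "\<forall>\<^sub>F R in at_right 0. m / 2 < 1 - X R + X R ^ 2 * f R / 4"
    using \<open>m > 0\<close> by (intro order_tendstoD) auto
  have "((\<lambda>R. X R * f R) \<longlongrightarrow> 1 / f 0 * f 0) (at_right 0)"
    unfolding X_def by (intro tendsto_intros ratio f_cont)
  then have ev_2: "\<forall>\<^sub>F R in at_right 0. X R * f R < 2"
    using \<open>f 0 > 3 / 4\<close> by (intro order_tendstoD) auto
  obtain b where "b > 0" and small:
      "\<And>R. 0 < R \<Longrightarrow> R < b \<Longrightarrow> m / 2 < 1 - X R + X R ^ 2 * f R / 4 \<and> X R * f R < 2"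
    using eventually_conj[OF ev_m ev_2] unfolding eventually_at_right_field by auto
  define \<delta> where "\<delta> = min b a / 2"
  have "0 < \<delta>" "\<delta> < a" "\<delta> < b" using \<open>b > 0\<close> \<open>a > 0\<close> by (auto simp: \<delta>_def)
  define u0 where "u0 = min (-1) (- rs (1 / \<delta>))"
  have "u0 < 0" "u0 \<le> - rs (1 / \<delta>)" by (auto simp: u0_def)
  have "ghat f R (Kfield u R) (Kfield u R) \<ge> 2 * m * u^2" if "(u, R) \<in> Omega a rs u0" for u R
  proof -
    have "0 < R" "R < a" "u < u0" "- u \<le> rs (1 / R)"
      using that by (auto simp: Omega_def)
    have "R < \<delta>"
      by (rule Omega_small_R[OF rs_mono \<open>0 < \<delta>\<close> \<open>\<delta> < a\<close> \<open>u0 \<le> - rs (1 / \<delta>)\<close> that])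
    then have bounds: "m / 2 < 1 - X R + X R ^ 2 * f R / 4" "X R * f R < 2"
      using small[of R] \<open>0 < R\<close> \<open>\<delta> < b\<close> by auto
    have "u < 0" using \<open>u < u0\<close> \<open>u0 < 0\<close> by simp
    then have "0 \<le> - R * u" using \<open>0 < R\<close> by (simp add: mult_pos_neg less_imp_le)
    moreover have "- R * u \<le> X R"
      unfolding X_def using mult_left_mono[OF \<open>- u \<le> rs (1 / R)\<close>, of R] \<open>0 < R\<close> by simp
    moreover have "f R \<ge> 0" using f_pos \<open>0 < R\<close> \<open>R < a\<close> by (simp add: less_imp_le)
    ultimately have "1 - X R + X R ^ 2 * f R / 4 \<le> 1 - (- R * u) + (- R * u)^2 * f R / 4"
      using bounds(2) by (intro quadratic_antimono) auto
    moreover have "1 - (- R * u) + (- R * u)^2 * f R / 4 = 1 + R * u + R^2 * u^2 * f R / 4"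
      by (simp add: power_mult_distrib)
    ultimately have "m / 2 \<le> 1 + R * u + R^2 * u^2 * f R / 4"
      using bounds(1) by linarith
    then have "4 * u^2 * (m / 2) \<le> 4 * u^2 * (1 + R * u + R^2 * u^2 * f R / 4)"
      by (intro mult_left_mono) auto
    then show ?thesis by (simp add: ghat_Kfield)
  qed
  moreover have "2 * m > 0" using \<open>m > 0\<close> by simp
  ultimately show ?thesis using \<open>u0 < 0\<close> by blast
qed

lemma f0_gt_if_uniformly_timelike:
  fixes f rs :: "real \<Rightarrow> real"
  assumes "a > 0" and "f 0 > 0"
    and f_cont: "(f \<longlongrightarrow> f 0) (at_right 0)"
    and ratio: "((\<lambda>R. R * rs (1 / R)) \<longlongrightarrow> 1 / f 0) (at_right 0)"
    and timelike: "\<exists>u0<0. \<exists>c>0. \<forall>(u, R)\<in>Omega a rs u0.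
                     ghat f R (Kfield u R) (Kfield u R) \<ge> c * u^2"
  shows "f 0 > 3 / 4"
proof (rule ccontr)
  assume "\<not> f 0 > 3 / 4"
  from timelike obtain u0 c where "u0 < 0" "c > 0"
    and bound: "\<And>u R. (u, R) \<in> Omega a rs u0 \<Longrightarrow> ghat f R (Kfield u R) (Kfield u R) \<ge> c * u^2"
    by blast
  have lim: "((\<lambda>R. 1 - R * rs (1 / R) + (R * rs (1 / R))^2 * f R / 4)
               \<longlongrightarrow> 1 - 3 / (4 * f 0)) (at_right 0)"
    using \<open>f 0 > 0\<close> by (intro null_cone_quadratic_tendsto f_cont ratio) auto
  have "1 - 3 / (4 * f 0) \<le> 0"
    using \<open>\<not> f 0 > 3 / 4\<close> \<open>f 0 > 0\<close> by (simp add: field_simps)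
  with \<open>c > 0\<close> have "1 - 3 / (4 * f 0) < c / 4" by linarith
  from order_tendstoD(2)[OF lim this] have ev_c:
    "\<forall>\<^sub>F R in at_right 0. 1 - R * rs (1 / R) + (R * rs (1 / R))^2 * f R / 4 < c / 4" .
  have "LIM R at_right 0. R * rs (1 / R) * inverse R :> at_top"
    using \<open>f 0 > 0\<close>
    by (intro filterlim_tendsto_pos_mult_at_top[OF ratio _ filterlim_inverse_at_top_right]) simp
  moreover have "\<forall>\<^sub>F R in at_right 0. R * rs (1 / R) * inverse R = rs (1 / R)"
    using eventually_at_right_less by eventually_elim simp
  ultimately have "LIM R at_right 0. rs (1 / R) :> at_top"
    by (rule filterlim_cong[OF refl refl, THEN iffD1, rotated])
  then have ev_u0: "\<forall>\<^sub>F R in at_right 0. rs (1 / R) > - u0"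
    unfolding filterlim_at_top_dense by blast
  have ev_a: "\<forall>\<^sub>F R in at_right 0. 0 < R \<and> R < a"
    unfolding eventually_at_right_field using \<open>a > 0\<close> by (intro exI[of _ a]) auto
  obtain R where R: "0 < R" "R < a" "rs (1 / R) > - u0"
      "1 - R * rs (1 / R) + (R * rs (1 / R))^2 * f R / 4 < c / 4"
    using eventually_happens'[OF _ eventually_conj[OF ev_a eventually_conj[OF ev_u0 ev_c]]] by auto
  define u where "u = - rs (1 / R)"
  have "(u, R) \<in> Omega a rs u0" using R by (simp add: Omega_def u_def)
  then have "c * u^2 \<le> ghat f R (Kfield u R) (Kfield u R)" by (rule bound)
  also have "\<dots> = 4 * u^2 * (1 - R * rs (1 / R) + (R * rs (1 / R))^2 * f R / 4)"
    by (simp add: ghat_Kfield u_def power_mult_distrib)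
  also have "\<dots> < 4 * u^2 * (c / 4)"
    using R(3,4) \<open>u0 < 0\<close> by (intro mult_strict_left_mono) (auto simp: u_def)
  finally show False by simp
qed

theorem lemma3:
  fixes f rs :: "real \<Rightarrow> real" and a :: real
  assumes "a > 0"
    and "real_analytic_on f {0..<a}"
    and "\<forall>R\<in>{0..<a}. f R > 0"
    and "\<forall>r>1 / a. (rs has_real_derivative 1 / f (1 / r)) (at r)"
  shows "(\<forall>u. \<forall>R\<in>{0..<a}.
            ghat f R (Kfield u R) (Kfield u R) = 4 * u^2 * (1 + R * u + R^2 * u^2 * f R / 4))
       \<and> (f 0 > 3 / 4 \<longleftrightarrow>
            (\<exists>u0<0. \<exists>c>0. \<forall>(u, R)\<in>Omega a rs u0.
               ghat f R (Kfield u R) (Kfield u R) \<ge> c * u^2))"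
proof -
  have "f 0 > 0" using assms(1,3) by auto
  have f_cont: "(f \<longlongrightarrow> f 0) (at_right 0)"
    using real_analytic_on_Ico_tendsto_at_right assms(1,2) .
  have ratio: "((\<lambda>R. R * rs (1 / R)) \<longlongrightarrow> 1 / f 0) (at_right 0)"
    using tortoise_ratio_tendsto[OF f_cont _ assms(4)] \<open>f 0 > 0\<close> by simp
  have rs_mono: "\<And>s t. 1 / a < s \<Longrightarrow> s \<le> t \<Longrightarrow> rs s \<le> rs t"
    using tortoise_mono[OF assms(1,3,4)] .
  show ?thesis
    using ghat_Kfield
      uniformly_timelike_if_f0_gt[OF assms(1,3) f_cont ratio rs_mono]
      f0_gt_if_uniformly_timelike[OF assms(1) \<open>f 0 > 0\<close> f_cont ratio]
    by blast
qed

end
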